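(* Let $m\neq\pm1$ be a square-free integer, $p$ a prime, $k$ a positive integer, $\alpha$ a root of $X^{p^k}-m$, $M=\mathbb{Q}(\alpha)$, $r$ the remainder of $m$ modulo $p^{k+1}$, $s:=v_p(m^p-m)-1$, and for $t\in\mathbb{N}$ let $h^{(r)}_t(X)=\frac{X^{p^k}-r^{p^t}}{X^{p^{k-t}}-r}=\sum_{i=0}^{p^t-1} r^{i}X^{p^k-(i+1)p^{k-t}}\in\mathbb{Z}[X]$. Suppose $s<k$. Then the following $p^k$ elements of $M$ are algebraic integers and are linearly independent over $\mathbb{Q}$: $$\alpha^j\cdot\frac{h^{(r)}_t(\alpha)}{p^t}\quad\text{for } 0\leq t\leq s-1,\ 0\leq j\leq p^{k-t}-p^{k-t-1}-1,$$ together with $$\alpha^j\cdot\frac{h^{(r)}_s(\alpha)}{p^s}\quad\text{for } 0\leq j\leq p^{k-s}-1.$$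
   Context: $v_p$ denotes the $p$-adic valuation on $\mathbb{Q}$. *)

theory Defs
  imports "HOL-Computational_Algebra.Computational_Algebra" "HOL-Complex_Analysis.Complex_Analysis"
begin

definition h_poly :: "int \<Rightarrow> nat \<Rightarrow> nat \<Rightarrow> nat \<Rightarrow> int poly" where
  "h_poly r p k t = (\<Sum>i<p^t. monom (r^i) (p^k - (i+1) * p^(k-t)))"

definition basis_index :: "nat \<Rightarrow> nat \<Rightarrow> nat \<Rightarrow> (nat \<times> nat) set" where
  "basis_index p k s =
     {(t,j). t < s \<and> j < p^(k-t) - p^(k-t-1)} \<union> {(t,j). t = s \<and> j < p^(k-s)}"

definition basis_elem :: "int \<Rightarrow> nat \<Rightarrow> nat \<Rightarrow> complex \<Rightarrow> nat \<times> nat \<Rightarrow> complex" where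
  "basis_elem r p k \<alpha> tj = (case tj of (t,j) \<Rightarrow>
     \<alpha>^j * poly (map_poly of_int (h_poly r p k t)) \<alpha> / of_nat (p^t))"

end

theory Submission
  imports
    "Berlekamp_Zassenhaus.Factor_Bound"
    "Jordan_Normal_Form.Char_Poly"
    "HOL-Number_Theory.Cong"
    Defs
begin

text \<open>Write \<open>T = p^t\<close>, \<open>\<beta> = \<alpha>^(p^(k-t))\<close>, so that \<open>\<beta>^T = m\<close> and \<open>h_t(\<alpha>)\<close> is the geometric
  sum \<open>(\<beta>^T - r^T) / (\<beta> - r)\<close>. For \<open>t \<le> s\<close> the congruence \<open>r^T \<equiv> m (mod p^(t+1))\<close> makes all
  coefficients of the binomial recurrence satisfied by \<open>h_t(\<alpha>)/T\<close> integral, so the basis elements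
  are algebraic integers. For independence, \<open>X^j h_t(X)\<close> is monic of degree \<open>p^k - p^(k-t) + j\<close>;
  these degrees run exactly once through \<open>0, ..., p^k - 1\<close>, so a vanishing rational combination
  is a rational polynomial of degree below \<open>p^k\<close> with root \<open>\<alpha>\<close>. It must be zero because
  \<open>X^(p^k) - m\<close> is Eisenstein at every prime factor of the squarefree \<open>m \<noteq> \<plusminus>1\<close>.\<close>

section \<open>Products of algebraic integers\<close>

definition int_span :: "('i \<Rightarrow> 'a::comm_ring_1) \<Rightarrow> 'i set \<Rightarrow> 'a set" where
  "int_span B I = range (\<lambda>c. \<Sum>i\<in>I. of_int (c i) * B i)"

lemma int_span_add: "u \<in> int_span B I \<Longrightarrow> v \<in> int_span B I \<Longrightarrow> u + v \<in> int_span B I"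
  unfolding int_span_def
  by (auto simp: sum.distrib distrib_right intro!: image_eqI[of _ _ "\<lambda>i. _ i + _ i"])

lemma int_span_of_int_mult: "u \<in> int_span B I \<Longrightarrow> of_int a * u \<in> int_span B I"
  unfolding int_span_def
  by (auto simp: sum_distrib_left mult.assoc intro!: image_eqI[of _ _ "\<lambda>i. a * _ i"])

lemma int_span_sum:
  "finite A \<Longrightarrow> (\<And>a. a \<in> A \<Longrightarrow> f a \<in> int_span B I) \<Longrightarrow> sum f A \<in> int_span B I"
proof (induction A rule: finite_induct)
  case empty
  have "(\<Sum>i\<in>I. of_int 0 * B i) = 0" by simp
  then show ?case unfolding int_span_def by (auto intro!: image_eqI[of _ _ "\<lambda>_. 0"])
qed (simp add: int_span_add)

lemma generator_in_int_span:
  assumes "finite I" "i \<in> I"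
  shows "B i \<in> int_span B I"
proof -
  have "(\<Sum>l\<in>I. of_int (if l = i then 1 else 0) * B l) = B i"
    using assms by (simp add: if_distrib[of "\<lambda>c. of_int c * _"] cong: if_cong)
  then show ?thesis unfolding int_span_def by (auto intro!: image_eqI[of _ _ "\<lambda>l. if l = i then 1 else 0"])
qed

lemma int_span_mult:
  assumes "u \<in> int_span B I" "v \<in> int_span C J" "finite I" "finite J"
  shows "u * v \<in> int_span (\<lambda>(i, j). B i * C j) (I \<times> J)"
proof -
  obtain b c where "u = (\<Sum>i\<in>I. of_int (b i) * B i)" "v = (\<Sum>j\<in>J. of_int (c j) * C j)"
    using assms(1,2) unfolding int_span_def by blast
  then have "u * v = (\<Sum>(i, j)\<in>I \<times> J. of_int (b i * c j) * (B i * C j))"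
    by (simp add: sum_product sum.cartesian_product case_prod_beta mult_ac)
  then show ?thesis unfolding int_span_def case_prod_beta
    by (auto intro!: image_eqI[of _ _ "\<lambda>ij. b (fst ij) * c (snd ij)"])
qed

lemma power_in_int_span:
  assumes "x ^ n = (\<Sum>i<n. of_int (c i) * x ^ i)"
  shows "x ^ a \<in> int_span (power x) {..<n}"
proof (induction a rule: less_induct)
  case (less a)
  show ?case
  proof (cases "a < n")
    case True
    then show ?thesis by (intro generator_in_int_span) auto
  next
    case False
    then have "x ^ a = x ^ (a - n) * x ^ n"
      by (simp flip: power_add)
    also have "\<dots> = (\<Sum>i<n. of_int (c i) * x ^ (a - n + i))"
      by (simp add: assms sum_distrib_left power_add mult.left_commute)
    also have "\<dots> \<in> int_span (power x) {..<n}"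
      using False by (intro int_span_sum int_span_of_int_mult less) auto
    finally show ?thesis .
  qed
qed

lemma algebraic_int_eigenvalue_int_mat:
  fixes x :: "'a::field_char_0" and A :: "int mat"
  assumes A: "A \<in> carrier_mat n n" and v: "v \<in> carrier_vec n" "v \<noteq> 0\<^sub>v n"
    and eigen: "map_mat of_int A *\<^sub>v v = x \<cdot>\<^sub>v v"
  shows "algebraic_int x"
proof -
  have Aa: "map_mat of_int A \<in> carrier_mat n n"
    using A by simp
  then have "eigenvalue (map_mat of_int A) x"
    using v eigen unfolding eigenvalue_def eigenvector_def by blast
  then have "poly (char_poly (map_mat of_int A)) x = 0"
    using eigenvalue_root_char_poly[OF Aa] by blast
  then have "poly (map_poly of_int (char_poly A)) x = 0"
    by (simp add: of_int_hom.char_poly_hom[OF A])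
  moreover have "lead_coeff (char_poly A) = 1"
    using degree_monic_char_poly[OF A] by simp
  ultimately show ?thesis
    using algebraic_int_altdef_ipoly by blast
qed

text \<open>Multiplication by \<open>x\<close> acts on the generators through an integer matrix, of which \<open>x\<close> is
  then an eigenvalue.\<close>
lemma algebraic_int_of_stable_int_span:
  fixes x :: "'a::field_char_0" and B :: "'i \<Rightarrow> 'a"
  assumes I: "finite I" and i0: "i0 \<in> I" "B i0 \<noteq> 0"
    and stable: "\<And>i. i \<in> I \<Longrightarrow> x * B i \<in> int_span B I"
  shows "algebraic_int x"
proof -
  define N where "N = card I"
  obtain f where f: "bij_betw f {0..<N} I"
    using ex_bij_betw_nat_finite[OF I] unfolding N_def by blast
  have "\<forall>i\<in>I. \<exists>c. x * B i = (\<Sum>l\<in>I. of_int (c l) * B l)"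
    using stable unfolding int_span_def by blast
  then obtain C where C: "\<And>i. i \<in> I \<Longrightarrow> x * B i = (\<Sum>l\<in>I. of_int (C i l) * B l)"
    by metis
  define A :: "int mat" where "A = Matrix.mat N N (\<lambda>(i, l). C (f i) (f l))"
  define v :: "'a Matrix.vec" where "v = Matrix.vec N (B \<circ> f)"
  show ?thesis
  proof (rule algebraic_int_eigenvalue_int_mat)
    show "A \<in> carrier_mat N N" "v \<in> carrier_vec N"
      by (simp_all add: A_def v_def)
    obtain n0 where "n0 < N" "f n0 = i0"
      using f i0(1) by (auto simp: bij_betw_def)
    then show "v \<noteq> 0\<^sub>v N"
      using i0(2) by (metis comp_apply Matrix.index_vec index_zero_vec(1) v_def)
    show "map_mat of_int A *\<^sub>v v = x \<cdot>\<^sub>v v"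
    proof (rule eq_vecI)
      fix n assume "n < dim_vec (x \<cdot>\<^sub>v v)"
      then have n: "n < N" by (simp add: v_def)
      then have "f n \<in> I" using f by (auto simp: bij_betw_def)
      have "vec_index (map_mat of_int A *\<^sub>v v) n = (\<Sum>l<N. of_int (C (f n) (f l)) * B (f l))"
        using n by (simp add: A_def v_def mult_mat_vec_def scalar_prod_def atLeast0LessThan)
      also have "\<dots> = (\<Sum>l\<in>I. of_int (C (f n) l) * B l)"
        using sum.reindex_bij_betw[OF f] by (simp add: atLeast0LessThan)
      also have "\<dots> = vec_index (x \<cdot>\<^sub>v v) n"
        using C[OF \<open>f n \<in> I\<close>] n by (simp add: v_def)
      finally show "vec_index (map_mat of_int A *\<^sub>v v) n = vec_index (x \<cdot>\<^sub>v v) n" .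
    qed (simp add: A_def v_def)
  qed
qed

lemma algebraic_int_recurrenceE:
  fixes x :: "'a::field_char_0"
  assumes "algebraic_int x"
  obtains n c where "n > 0" "x ^ n = (\<Sum>i<n. of_int (c i) * x ^ i)"
proof -
  obtain p where root: "poly (map_poly of_int p) x = 0" and monic: "lead_coeff p = 1"
    using assms algebraic_int_altdef_ipoly by blast
  define n where "n = degree p"
  have "0 = (\<Sum>i\<le>n. of_int (coeff p i) * x ^ i)"
    using root by (simp add: poly_altdef n_def)
  also have "\<dots> = (\<Sum>i<n. of_int (coeff p i) * x ^ i) + x ^ n"
    using monic by (simp add: n_def lessThan_Suc_atMost[symmetric])
  finally have "x ^ n = (\<Sum>i<n. of_int (- coeff p i) * x ^ i)"
    by (simp add: sum_negf eq_neg_iff_add_eq_0 add.commute)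
  moreover have "n > 0"
  proof (rule ccontr)
    assume "\<not> n > 0"
    then obtain a where "p = [:a:]" by (metis degree_eq_zeroE n_def neq0_conv)
    with root monic show False by simp
  qed
  ultimately show ?thesis by (rule that[rotated])
qed

lemma algebraic_int_recurrenceI:
  fixes x :: "'a::field_char_0"
  assumes rec: "x ^ n = (\<Sum>i<n. of_int (c i) * x ^ i)"
  shows "algebraic_int x"
proof (rule algebraic_int_of_stable_int_span)
  have "n > 0" using rec by (cases n) auto
  then show "0 \<in> {..<n}" by simp
  show "x * x ^ i \<in> int_span (power x) {..<n}" for i
    using power_in_int_span[OF rec, of "Suc i"] by simp
qed auto

lemma algebraic_int_mult:
  fixes x y :: "'a::field_char_0"
  assumes "algebraic_int x" "algebraic_int y"
  shows "algebraic_int (x * y)"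
proof -
  obtain n c where n: "n > 0" and x: "x ^ n = (\<Sum>i<n. of_int (c i) * x ^ i)"
    using assms(1) by (rule algebraic_int_recurrenceE)
  obtain d e where d: "d > 0" and y: "y ^ d = (\<Sum>i<d. of_int (e i) * y ^ i)"
    using assms(2) by (rule algebraic_int_recurrenceE)
  show ?thesis
  proof (rule algebraic_int_of_stable_int_span)
    show "(0, 0) \<in> {..<n} \<times> {..<d}" using n d by simp
    show "x * y * (case ij of (a, b) \<Rightarrow> x ^ a * y ^ b)
      \<in> int_span (\<lambda>(a, b). x ^ a * y ^ b) ({..<n} \<times> {..<d})" for ij
      using int_span_mult[OF power_in_int_span[OF x] power_in_int_span[OF y], of "Suc (fst ij)" "Suc (snd ij)"]
      by (simp add: case_prod_beta mult_ac)
  qed auto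
qed

lemma algebraic_int_power: "algebraic_int (x::'a::field_char_0) \<Longrightarrow> algebraic_int (x ^ n)"
  by (induction n) (simp_all add: algebraic_int_mult)

section \<open>Integrality of divided geometric sums\<close>

lemma geometric_sum_binomial_expansion:
  fixes \<beta> \<rho> :: "'a::field"
  assumes "\<beta> \<noteq> \<rho>"
  shows "(\<Sum>i<T. \<rho> ^ (T - Suc i) * \<beta> ^ i)
    = (\<Sum>j<T. of_nat (T choose Suc j) * (\<beta> - \<rho>) ^ j * \<rho> ^ (T - Suc j))"
proof -
  have "(\<beta> - \<rho>) * (\<Sum>i<T. \<rho> ^ (T - Suc i) * \<beta> ^ i) = ((\<beta> - \<rho>) + \<rho>) ^ T - \<rho> ^ T"
    by (simp add: power_diff_sumr2)
  also have "\<dots> = (\<Sum>j\<le>T. of_nat (T choose j) * (\<beta> - \<rho>) ^ j * \<rho> ^ (T - j)) - \<rho> ^ T"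
    by (simp only: binomial_ring)
  also have "\<dots> = (\<beta> - \<rho>) * (\<Sum>j<T. of_nat (T choose Suc j) * (\<beta> - \<rho>) ^ j * \<rho> ^ (T - Suc j))"
    by (simp add: sum.atMost_shift sum_distrib_left mult_ac)
  finally show ?thesis
    using assms by simp
qed

text \<open>With \<open>\<gamma> = \<beta> - \<rho>\<close> one has \<open>\<gamma> \<delta> = (\<beta>^T - \<rho>^T) / T\<close>; expand one factor \<open>\<delta>\<close> of \<open>\<delta>^T\<close> in
  powers of \<open>\<gamma>\<close> and absorb each \<open>\<gamma>^j\<close> into \<open>\<delta>^j\<close>.\<close>
lemma geometric_sum_div_power:
  fixes \<beta> \<rho> :: "'a::field_char_0"
  assumes "\<beta> \<noteq> \<rho>" "0 < T"
  defines "\<delta> \<equiv> (\<Sum>i<T. \<rho> ^ (T - Suc i) * \<beta> ^ i) / of_nat T"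
  shows "\<delta> ^ T = (\<Sum>j<T. of_nat (T choose Suc j) * \<rho> ^ (T - Suc j) * (\<beta> ^ T - \<rho> ^ T) ^ j
    / of_nat T ^ Suc j * \<delta> ^ (T - Suc j))"
proof -
  define \<gamma> where "\<gamma> = \<beta> - \<rho>"
  have \<gamma>\<delta>: "\<gamma> * \<delta> = (\<beta> ^ T - \<rho> ^ T) / of_nat T"
    by (simp add: \<delta>_def \<gamma>_def power_diff_sumr2)
  have "\<delta> = (\<Sum>j<T. of_nat (T choose Suc j) * \<gamma> ^ j * \<rho> ^ (T - Suc j)) / of_nat T"
    using assms(1) by (simp add: \<delta>_def \<gamma>_def geometric_sum_binomial_expansion)
  then have "\<delta> ^ T = \<delta> ^ (T - 1) * (\<Sum>j<T. of_nat (T choose Suc j) * \<gamma> ^ j * \<rho> ^ (T - Suc j)) / of_nat T"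
    using assms(2) by (simp add: power_minus_mult[symmetric])
  also have "\<dots> = (\<Sum>j<T. of_nat (T choose Suc j) * \<rho> ^ (T - Suc j) * (\<gamma> * \<delta>) ^ j
      / of_nat T * \<delta> ^ (T - Suc j))"
    unfolding sum_distrib_left sum_divide_distrib
  proof (rule sum.cong)
    fix j assume "j \<in> {..<T}"
    then have "\<delta> ^ (T - 1) = \<delta> ^ j * \<delta> ^ (T - Suc j)"
      by (simp flip: power_add)
    then show "\<delta> ^ (T - 1) * (of_nat (T choose Suc j) * \<gamma> ^ j * \<rho> ^ (T - Suc j)) / of_nat T
        = of_nat (T choose Suc j) * \<rho> ^ (T - Suc j) * (\<gamma> * \<delta>) ^ j / of_nat T * \<delta> ^ (T - Suc j)"
      by (simp add: power_mult_distrib mult_ac)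
  qed simp
  also have "\<dots> = (\<Sum>j<T. of_nat (T choose Suc j) * \<rho> ^ (T - Suc j) * (\<beta> ^ T - \<rho> ^ T) ^ j
      / of_nat T ^ Suc j * \<delta> ^ (T - Suc j))"
    unfolding \<gamma>\<delta> power_divide by (simp add: mult_ac)
  finally show ?thesis .
qed

lemma algebraic_int_geometric_sum_div:
  fixes \<beta> :: "'a::field_char_0" and m r :: int
  assumes root: "\<beta> ^ T = of_int m" and ne: "\<beta> \<noteq> of_int r"
    and dvd: "\<And>j. 0 < j \<Longrightarrow> j \<le> T \<Longrightarrow> int T ^ j dvd int (T choose j) * (m - r ^ T) ^ (j - 1)"
  shows "algebraic_int ((\<Sum>i<T. of_int r ^ (T - Suc i) * \<beta> ^ i) / of_nat T)"
proof (cases "T = 0")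
  case False
  define \<delta> where "\<delta> = (\<Sum>i<T. of_int r ^ (T - Suc i) * \<beta> ^ i) / of_nat T"
  define a where "a j = int (T choose Suc j) * r ^ (T - Suc j) * (m - r ^ T) ^ j div int T ^ Suc j"
    for j
  have a: "(of_int (a j) :: 'a) = of_nat (T choose Suc j) * of_int r ^ (T - Suc j)
      * (\<beta> ^ T - of_int r ^ T) ^ j / of_nat T ^ Suc j" if "j < T" for j
  proof -
    have "int T ^ Suc j dvd int (T choose Suc j) * (m - r ^ T) ^ j"
      using dvd[of "Suc j"] that by simp
    then have "int T ^ Suc j dvd r ^ (T - Suc j) * (int (T choose Suc j) * (m - r ^ T) ^ j)"
      by (rule dvd_mult)
    then have "int T ^ Suc j dvd int (T choose Suc j) * r ^ (T - Suc j) * (m - r ^ T) ^ j"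
      by (simp only: ac_simps)
    then show ?thesis
      by (simp add: a_def root of_int_div)
  qed
  have "\<delta> ^ T = (\<Sum>j<T. of_nat (T choose Suc j) * of_int r ^ (T - Suc j)
      * (\<beta> ^ T - of_int r ^ T) ^ j / of_nat T ^ Suc j * \<delta> ^ (T - Suc j))"
    unfolding \<delta>_def using ne False by (intro geometric_sum_div_power) simp_all
  also have "\<dots> = (\<Sum>j<T. of_int (a j) * \<delta> ^ (T - Suc j))"
    by (intro sum.cong) (simp_all add: a)
  also have "\<dots> = (\<Sum>i<T. of_int (a (T - Suc i)) * \<delta> ^ i)"
    by (subst sum.nat_diff_reindex[symmetric]) (auto intro!: sum.cong simp: Suc_diff_Suc)
  finally show ?thesis
    unfolding \<delta>_def by (rule algebraic_int_recurrenceI)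
qed simp

lemma multiplicity_less_self:
  fixes p j :: nat
  assumes "prime p" "0 < j"
  shows "multiplicity p j < j"
proof -
  have "p ^ multiplicity p j \<le> j"
    using assms(2) by (intro dvd_imp_le multiplicity_dvd) auto
  moreover have "multiplicity p j < 2 ^ multiplicity p j"
    by (rule less_exp)
  moreover have "(2::nat) ^ multiplicity p j \<le> p ^ multiplicity p j"
    using prime_ge_2_nat[OF assms(1)] by (rule power_mono) simp
  ultimately show ?thesis by linarith
qed

lemma prime_power_dvd_binomial_prime_power:
  fixes p j t :: nat
  assumes p: "prime p" and j: "0 < j" "j \<le> p ^ t"
  shows "p ^ (t - multiplicity p j) dvd (p ^ t choose j)"
proof -
  have nonzero: "(p ^ t choose j) \<noteq> 0"
    using j by simp
  have "j * (p ^ t choose j) = p ^ t * ((p ^ t - 1) choose (j - 1))"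
    using j by (intro times_binomial_minus1_eq) simp
  then have "p ^ t dvd j * (p ^ t choose j)"
    by simp
  then have "t \<le> multiplicity p (j * (p ^ t choose j))"
    using nonzero j p by (intro multiplicity_geI) (auto simp: prime_gt_1_nat)
  also have "\<dots> = multiplicity p j + multiplicity p (p ^ t choose j)"
    using nonzero j p by (intro prime_elem_multiplicity_mult_distrib) auto
  finally show ?thesis
    by (intro multiplicity_dvd') simp
qed

lemma prime_power_pow_dvd_binomial_mult:
  fixes p j t :: nat and c :: int
  assumes p: "prime p" and j: "0 < j" "j \<le> p ^ t" and c: "int p ^ (t + 1) dvd c"
  shows "int (p ^ t) ^ j dvd int (p ^ t choose j) * c ^ (j - 1)"
proof -
  define v where "v = multiplicity p j"
  have "v < j"
    unfolding v_def using p j(1) by (rule multiplicity_less_self)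
  then have exp: "t * j \<le> (t - v) + (t + 1) * (j - 1)"
    by (cases j) (auto simp: algebra_simps)
  have "int (p ^ t) ^ j = int p ^ (t * j)"
    by (simp add: power_mult)
  also have "\<dots> dvd int p ^ ((t - v) + (t + 1) * (j - 1))"
    using exp by (rule le_imp_power_dvd)
  also have "\<dots> = int p ^ (t - v) * (int p ^ (t + 1)) ^ (j - 1)"
    by (simp only: power_add power_mult)
  also have "\<dots> dvd int (p ^ t choose j) * c ^ (j - 1)"
  proof (rule mult_dvd_mono)
    have "int (p ^ (t - v)) dvd int (p ^ t choose j)"
      unfolding int_dvd_int_iff v_def using p j by (rule prime_power_dvd_binomial_prime_power)
    then show "int p ^ (t - v) dvd int (p ^ t choose j)"
      by simp
    show "(int p ^ (t + 1)) ^ (j - 1) dvd c ^ (j - 1)"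
      using c by (rule dvd_power_same)
  qed
  finally show ?thesis .
qed

lemma cong_power_power_self:
  assumes "[x ^ q = x] (mod n)"
  shows "[x ^ (q ^ u) = x] (mod n)"
proof (induction u)
  case (Suc u)
  have "x ^ (q ^ Suc u) = (x ^ (q ^ u)) ^ q"
    by (simp only: power_Suc2 power_mult)
  then have "[x ^ (q ^ Suc u) = (x ^ (q ^ u)) ^ q] (mod n)"
    by (simp only: cong_refl)
  also have "[(x ^ (q ^ u)) ^ q = x ^ q] (mod n)"
    using Suc.IH by (rule cong_pow)
  finally show ?case using assms by (rule cong_trans)
qed simp

text \<open>\<open>p^(t+1)\<close> divides \<open>p^(k+1)\<close> and, if \<open>t > 0\<close>, also \<open>m^p - m\<close>; hence
  \<open>r^(p^t) \<equiv> m^(p^t) \<equiv> m\<close>.\<close>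
lemma cong_prime_power_residue_power:
  fixes m r :: int and p k t :: nat
  assumes r: "[r = m] (mod int p ^ (k + 1))" and "t \<le> k"
    and t: "t \<le> multiplicity (int p) (m ^ p - m) - 1"
  shows "[r ^ (p ^ t) = m] (mod int p ^ (t + 1))"
proof -
  have "[r ^ (p ^ t) = m ^ (p ^ t)] (mod int p ^ (t + 1))"
    using r \<open>t \<le> k\<close> by (intro cong_pow cong_dvd_modulus[OF r] le_imp_power_dvd) simp
  also have "[m ^ (p ^ t) = m] (mod int p ^ (t + 1))"
  proof (cases "t = 0")
    case False
    then have "int p ^ (t + 1) dvd int p ^ multiplicity (int p) (m ^ p - m)"
      using t by (intro le_imp_power_dvd) simp
    also have "\<dots> dvd m ^ p - m"
      by (rule multiplicity_dvd)
    finally show ?thesis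
      by (intro cong_power_power_self) (simp add: cong_iff_dvd_diff)
  qed simp
  finally show ?thesis .
qed

section \<open>Eisenstein's criterion for \<open>X^n - m\<close>\<close>

lemma prime_not_dvd_coeff_mult:
  fixes g h :: "int poly" and l :: int
  assumes l: "prime l"
    and g: "\<not> l dvd coeff g i" "\<And>a. a < i \<Longrightarrow> l dvd coeff g a"
    and h: "\<not> l dvd coeff h j" "\<And>b. b < j \<Longrightarrow> l dvd coeff h b"
  shows "\<not> l dvd coeff (g * h) (i + j)"
proof -
  have "coeff (g * h) (i + j) = coeff g i * coeff h j
      + (\<Sum>a\<in>{..i + j} - {i}. coeff g a * coeff h (i + j - a))"
    unfolding coeff_mult by (subst sum.remove[of _ i]) auto
  moreover have "l dvd (\<Sum>a\<in>{..i + j} - {i}. coeff g a * coeff h (i + j - a))"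
  proof (rule dvd_sum)
    fix a assume "a \<in> {..i + j} - {i}"
    then have "a < i \<or> i + j - a < j" by auto
    then show "l dvd coeff g a * coeff h (i + j - a)"
      using g(2) h(2) by (meson dvd_mult dvd_mult2)
  qed
  moreover have "\<not> l dvd coeff g i * coeff h j"
    using l g(1) h(1) by (simp add: prime_dvd_mult_iff)
  ultimately show ?thesis
    by (simp add: dvd_add_left_iff)
qed

lemma eisenstein_criterion:
  fixes f g h :: "int poly" and l :: int
  assumes l: "prime l" and f: "f = g * h"
    and lead: "\<not> l dvd lead_coeff f"
    and low: "\<And>i. i < degree f \<Longrightarrow> l dvd coeff f i"
    and const: "\<not> l ^ 2 dvd coeff f 0"
  shows "degree g = 0 \<or> degree h = 0"
proof -
  have "\<not> l dvd lead_coeff g" "\<not> l dvd lead_coeff h"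
    using lead unfolding f lead_coeff_mult by auto
  then have ex: "\<exists>i. \<not> l dvd coeff g i" "\<exists>j. \<not> l dvd coeff h j"
    by blast+
  define i where "i = (LEAST i. \<not> l dvd coeff g i)"
  define j where "j = (LEAST j. \<not> l dvd coeff h j)"
  have i: "\<not> l dvd coeff g i" "\<And>a. a < i \<Longrightarrow> l dvd coeff g a"
    unfolding i_def using LeastI_ex[OF ex(1)] not_less_Least by auto
  have j: "\<not> l dvd coeff h j" "\<And>b. b < j \<Longrightarrow> l dvd coeff h b"
    unfolding j_def using LeastI_ex[OF ex(2)] not_less_Least by auto
  have "g \<noteq> 0" "h \<noteq> 0"
    using i(1) j(1) by auto
  then have deg: "degree f = degree g + degree h"
    unfolding f by (rule degree_mult_eq)
  have "\<not> l dvd coeff f (i + j)"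
    unfolding f using l i j by (rule prime_not_dvd_coeff_mult)
  then have "degree g + degree h \<le> i + j"
    using low deg by (metis not_le)
  moreover have "i \<le> degree g" "j \<le> degree h"
    using i(1) j(1) by (auto intro: le_degree)
  ultimately have "i = degree g" "j = degree h"
    by linarith+
  show ?thesis
  proof (rule ccontr)
    assume "\<not> ?thesis"
    then have "l dvd coeff g 0" "l dvd coeff h 0"
      using i(2) j(2) \<open>i = degree g\<close> \<open>j = degree h\<close> by auto
    then have "l ^ 2 dvd coeff f 0"
      unfolding f coeff_mult_0 power2_eq_square by (rule mult_dvd_mono)
    with const show False ..
  qed
qed

lemma degree_pure_power_poly:
  fixes c :: "'a::comm_ring_1"
  assumes "0 < n"
  shows "degree (monom 1 n - [:c:]) = n"
proof -
  have "degree [:- c:] < degree (monom (1::'a) n)"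
    using assms by (simp add: degree_monom_eq)
  then have "degree (monom 1 n + [:- c:]) = n"
    by (simp add: degree_add_eq_left degree_monom_eq)
  then show ?thesis
    by (simp add: diff_conv_add_uminus del: add_uminus_conv_diff)
qed

lemma pure_power_poly_factor_trivial:
  fixes m :: int and g h :: "int poly"
  assumes m: "squarefree m" "\<not> is_unit m" and n: "0 < n"
    and gh: "monom 1 n - [:m:] = g * h"
  shows "degree g = 0 \<or> degree h = 0"
proof -
  have "m \<noteq> 0"
    using m(1) by auto
  then obtain l where l: "prime l" "l dvd m"
    using prime_divisor_exists m(2) by blast
  have "\<not> l ^ 2 dvd m"
    using m(1) l(1) by (metis not_prime_unit squarefree_def)
  have deg: "degree (monom 1 n - [:m:]) = n"
    using n by (rule degree_pure_power_poly)
  show ?thesis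
  proof (rule eisenstein_criterion[OF l(1) gh])
    show "\<not> l dvd lead_coeff (monom 1 n - [:m:])"
    proof -
      have "lead_coeff (monom 1 n - [:m:]) = 1"
        unfolding deg using n by (cases n) simp_all
      then show ?thesis
        using l(1) by (metis not_prime_unit)
    qed
    show "l dvd coeff (monom 1 n - [:m:]) i" if "i < degree (monom 1 n - [:m:])" for i
      using that l(2) by (simp add: deg coeff_pCons split: nat.split)
    show "\<not> l ^ 2 dvd coeff (monom 1 n - [:m:]) 0"
      using n \<open>\<not> l ^ 2 dvd m\<close> by simp
  qed
qed

text \<open>Otherwise the gcd of \<open>q\<close> and \<open>X^n - m\<close> is a proper factor of \<open>X^n - m\<close>, which lifts to
  \<open>\<int>[X]\<close> by Gauss's lemma and contradicts Eisenstein's criterion.\<close>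
lemma pure_root_degree_le:
  fixes m :: int and \<alpha> :: "'a::field_char_0" and q :: "rat poly"
  assumes m: "squarefree m" "\<not> is_unit m" and n: "0 < n"
    and \<alpha>: "\<alpha> ^ n = of_int m"
    and q: "q \<noteq> 0" "poly (map_poly of_rat q) \<alpha> = 0"
  shows "n \<le> degree q"
proof (rule ccontr)
  interpret of_rat_poly: map_poly_comm_ring_hom "of_rat :: rat \<Rightarrow> 'a" ..
  assume "\<not> n \<le> degree q"
  define f :: "rat poly" where "f = monom 1 n - [:of_int m:]"
  define g where "g = gcd f q"
  have f: "map_poly of_int (monom 1 n - [:m:]) = f"
    by (simp add: f_def of_int_poly_hom.hom_minus of_int_hom.map_poly_pCons_hom)
  have "poly (map_poly of_rat f) \<alpha> = 0"
    using \<alpha> by (simp add: f_def of_rat_poly.hom_minus of_rat_hom.map_poly_pCons_hom poly_monom)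
  moreover obtain u v where "u * f + v * q = g"
    using bezout_coefficients_fst_snd[of f q] unfolding g_def by blast
  ultimately have "poly (map_poly of_rat g) \<alpha> = 0"
    using q(2) by (simp add: of_rat_poly.hom_add of_rat_poly.hom_mult flip: \<open>u * f + v * q = g\<close>)
  then have "0 < degree g"
    using q(1) by (cases "degree g") (auto simp: g_def of_rat_hom.map_poly_pCons_hom elim!: degree_eq_zeroE)
  moreover obtain w where fw: "f = g * w"
    unfolding g_def by (meson dvdE gcd_dvd1)
  moreover have "degree g < n"
    using dvd_imp_degree_le[of g q] q(1) \<open>\<not> n \<le> degree q\<close> by (simp add: g_def)
  moreover have "degree f = n"
    using n unfolding f_def by (rule degree_pure_power_poly)
  ultimately have "0 < degree g" "0 < degree w"
    using degree_mult_le[of g w] by auto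
  moreover obtain g' h'
    where fac: "monom 1 n - [:m:] = g' * h'" "degree g' = degree g" "degree h' = degree w"
    using rat_to_int_factor f fw by metis
  ultimately show False
    using pure_power_poly_factor_trivial[OF m n fac(1)] fac(2,3) by simp
qed

section \<open>The basis polynomials\<close>

lemma degree_sum_smult_less:
  assumes "finite I" "0 < n" "\<And>i. i \<in> I \<Longrightarrow> degree (P i) < n"
  shows "degree (\<Sum>i\<in>I. smult (c i) (P i)) < n"
proof -
  have "degree (smult (c i) (P i)) \<le> n - 1" if "i \<in> I" for i
    using degree_smult_le[of "c i" "P i"] assms(3)[OF that] by linarith
  then have "degree (\<Sum>i\<in>I. smult (c i) (P i)) \<le> n - 1"
    using assms(1) by (intro degree_sum_le)
  then show ?thesis
    using assms(2) by linarith
qed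

lemma sum_smult_distinct_degrees_eq_0:
  fixes P :: "'i \<Rightarrow> 'a::idom poly"
  assumes I: "finite I" and inj: "inj_on (\<lambda>i. degree (P i)) I"
    and nonzero: "\<And>i. i \<in> I \<Longrightarrow> P i \<noteq> 0"
    and sum: "(\<Sum>i\<in>I. smult (c i) (P i)) = 0"
    and "i \<in> I"
  shows "c i = 0"
proof (rule ccontr)
  define J where "J = {i\<in>I. c i \<noteq> 0}"
  assume "c i \<noteq> 0"
  then have "J \<noteq> {}" "finite J"
    using I \<open>i \<in> I\<close> by (auto simp: J_def)
  then have "Max ((\<lambda>i. degree (P i)) ` J) \<in> (\<lambda>i. degree (P i)) ` J"
    by (intro Max_in) auto
  then obtain i0 where i0: "i0 \<in> J" and i0_max: "degree (P i0) = Max ((\<lambda>i. degree (P i)) ` J)"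
    by auto
  have max: "degree (P i) \<le> degree (P i0)" if "i \<in> J" for i
    unfolding i0_max using \<open>finite J\<close> that by (intro Max_ge) auto
  have other: "c i * coeff (P i) (degree (P i0)) = 0" if "i \<in> I - {i0}" for i
  proof (cases "i \<in> J")
    case True
    then have "degree (P i) < degree (P i0)"
      using max[OF True] inj i0 that by (auto simp: J_def inj_on_def le_less)
    then show ?thesis by (simp add: coeff_eq_0)
  qed (use that in \<open>simp add: J_def\<close>)
  have "0 = coeff (\<Sum>i\<in>I. smult (c i) (P i)) (degree (P i0))"
    by (simp add: sum)
  also have "\<dots> = c i0 * lead_coeff (P i0) + (\<Sum>i\<in>I - {i0}. c i * coeff (P i) (degree (P i0)))"
    using I i0 by (simp add: coeff_sum sum.remove[of I i0] J_def)
  also have "\<dots> = c i0 * lead_coeff (P i0)"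
    using other by (simp add: sum.neutral)
  finally show False
    using i0 nonzero by (simp add: J_def)
qed

lemma h_poly_altdef:
  assumes "t \<le> k"
  shows "h_poly r p k t = (\<Sum>i<p ^ t. monom (r ^ i) (p ^ (k - t) * (p ^ t - Suc i)))"
proof -
  have "p ^ k - (i + 1) * p ^ (k - t) = p ^ (k - t) * (p ^ t - Suc i)" for i
    using assms by (simp add: diff_mult_distrib2 mult.commute flip: power_add)
  then show ?thesis
    unfolding h_poly_def by simp
qed

lemma h_poly_monic:
  assumes "0 < p" "t \<le> k"
  shows "degree (h_poly r p k t) = p ^ k - p ^ (k - t)" "lead_coeff (h_poly r p k t) = 1"
proof -
  define e T where "e = p ^ (k - t)" and "T = p ^ t"
  have "0 < e" "0 < T" using assms(1) by (simp_all add: e_def T_def)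
  have d: "p ^ k - p ^ (k - t) = e * (T - 1)"
    using assms(2) by (simp add: e_def T_def diff_mult_distrib2 flip: power_add)
  have exponent: "e * (T - Suc i) = l \<longleftrightarrow> i = 0 \<and> l = e * (T - 1)"
    if "i < T" "e * (T - 1) \<le> l" for i l
  proof -
    have "e * (T - Suc i) < e * (T - 1)" if "i > 0"
      using \<open>0 < e\<close> \<open>i < T\<close> that by simp
    then show ?thesis using that by (cases "i = 0") auto
  qed
  have coeff: "coeff (h_poly r p k t) l = (if l = e * (T - 1) then 1 else 0)"
    if "e * (T - 1) \<le> l" for l
  proof -
    have "coeff (h_poly r p k t) l = (\<Sum>i<T. if e * (T - Suc i) = l then r ^ i else 0)"
      using assms(2) by (simp add: h_poly_altdef coeff_sum e_def T_def)
    also have "\<dots> = (\<Sum>i<T. if i = 0 then (if l = e * (T - 1) then 1 else 0) else 0)"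
      using exponent[OF _ that] by (intro sum.cong) auto
    also have "\<dots> = (if l = e * (T - 1) then 1 else 0)"
      using \<open>0 < T\<close> by simp
    finally show ?thesis .
  qed
  have "degree (h_poly r p k t) = e * (T - 1)"
    using coeff by (intro antisym degree_le le_degree) auto
  then show "degree (h_poly r p k t) = p ^ k - p ^ (k - t)" "lead_coeff (h_poly r p k t) = 1"
    using coeff by (simp_all add: d)
qed

lemma poly_h_poly:
  fixes \<alpha> :: "'a::comm_ring_1"
  assumes "t \<le> k"
  shows "poly (map_poly of_int (h_poly r p k t)) \<alpha>
    = (\<Sum>i<p ^ t. of_int r ^ (p ^ t - Suc i) * (\<alpha> ^ p ^ (k - t)) ^ i)"
proof -
  have "poly (map_poly of_int (h_poly r p k t)) \<alpha>
      = (\<Sum>i<p ^ t. of_int r ^ i * (\<alpha> ^ p ^ (k - t)) ^ (p ^ t - Suc i))"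
    using assms by (simp add: h_poly_altdef of_int_poly_hom.hom_sum map_poly_monom poly_sum
        poly_monom power_mult)
  also have "\<dots> = (\<Sum>i<p ^ t. of_int r ^ (p ^ t - Suc i) * (\<alpha> ^ p ^ (k - t)) ^ i)"
    by (subst sum.nat_diff_reindex[symmetric]) (auto intro!: sum.cong simp: Suc_diff_Suc)
  finally show ?thesis .
qed

definition basis_degree :: "nat \<Rightarrow> nat \<Rightarrow> nat \<times> nat \<Rightarrow> nat" where
  "basis_degree p k = (\<lambda>(t, j). p ^ k - p ^ (k - t) + j)"

definition basis_poly :: "int \<Rightarrow> nat \<Rightarrow> nat \<Rightarrow> nat \<times> nat \<Rightarrow> int poly" where
  "basis_poly r p k = (\<lambda>(t, j). monom 1 j * h_poly r p k t)"

lemma basis_poly_monic: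
  assumes "0 < p" "t \<le> k"
  shows "degree (basis_poly r p k (t, j)) = basis_degree p k (t, j)"
    "lead_coeff (basis_poly r p k (t, j)) = 1"
proof -
  have "h_poly r p k t \<noteq> 0"
    using h_poly_monic(2)[OF assms, of r] by auto
  then show "degree (basis_poly r p k (t, j)) = basis_degree p k (t, j)"
    using h_poly_monic(1)[OF assms]
    by (simp add: basis_poly_def basis_degree_def degree_mult_eq Polynomial.degree_monom_eq)
  show "lead_coeff (basis_poly r p k (t, j)) = 1"
    using h_poly_monic(2)[OF assms] by (simp add: basis_poly_def lead_coeff_mult Polynomial.degree_monom_eq)
qed

lemma basis_elem_eq_poly:
  "basis_elem r p k \<alpha> (t, j) = poly (map_poly of_int (basis_poly r p k (t, j))) \<alpha> / of_nat (p ^ t)"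
  by (simp add: basis_elem_def basis_poly_def of_int_poly_hom.hom_mult map_poly_monom poly_monom)

text \<open>The block \<open>t < s\<close> of the index set has degrees in \<open>[p^k - p^(k-t), p^k - p^(k-t-1))\<close> and
  the block \<open>t = s\<close> has degrees in \<open>[p^k - p^(k-s), p^k)\<close>.\<close>
lemma basis_degree_less_basis_degree:
  assumes "0 < p" "(t, j) \<in> basis_index p k s" "(t', j') \<in> basis_index p k s" "t < t'"
  shows "basis_degree p k (t, j) < basis_degree p k (t', j')"
proof -
  have "j < p ^ (k - t) - p ^ (k - Suc t)"
    using assms by (auto simp: basis_index_def)
  moreover have "p ^ (k - t') \<le> p ^ (k - Suc t)" "p ^ (k - t) \<le> p ^ k"
    using assms(1,4) by (auto intro: power_increasing)
  ultimately show ?thesis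
    by (simp add: basis_degree_def) linarith
qed

lemma basis_degree_less_power:
  assumes "0 < p" "(t, j) \<in> basis_index p k s"
  shows "basis_degree p k (t, j) < p ^ k"
proof -
  have "p ^ (k - t) \<le> p ^ k" "p ^ (k - Suc t) \<le> p ^ (k - t)"
    using assms(1) by (auto intro: power_increasing)
  then show ?thesis
    using assms(2) by (auto simp: basis_index_def basis_degree_def; linarith)
qed

text \<open>The witness is the least \<open>t\<close> whose block reaches beyond \<open>l\<close>, or \<open>s\<close> if there is none.\<close>
lemma basis_degree_surj:
  assumes "0 < p" "l < p ^ k"
  obtains tj where "tj \<in> basis_index p k s" "basis_degree p k tj = l"
proof -
  define P where "P t \<longleftrightarrow> t = s \<or> l < p ^ k - p ^ (k - Suc t)" for t
  define t where "t = (LEAST t. P t)"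
  have "P t"
    unfolding t_def by (rule LeastI[of P s]) (simp add: P_def)
  have "t \<le> s"
    unfolding t_def by (rule Least_le) (simp add: P_def)
  have lower: "p ^ k - p ^ (k - t) \<le> l"
  proof (cases t)
    case (Suc u)
    then have "\<not> P u" unfolding t_def by (metis lessI not_less_Least)
    then show ?thesis by (simp add: P_def Suc)
  qed simp
  have "p ^ (k - t) \<le> p ^ k" "p ^ (k - Suc t) \<le> p ^ (k - t)"
    using assms(1) by (auto intro: power_increasing)
  then have "(t, l - (p ^ k - p ^ (k - t))) \<in> basis_index p k s"
  proof (cases "t = s")
    case False
    then have "l < p ^ k - p ^ (k - Suc t)"
      using \<open>P t\<close> by (simp add: P_def)
    then show ?thesis
      using False \<open>t \<le> s\<close> lower \<open>p ^ (k - Suc t) \<le> p ^ (k - t)\<close> \<open>p ^ (k - t) \<le> p ^ k\<close>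
      by (simp add: basis_index_def) linarith
  qed (use lower assms(2) in \<open>simp add: basis_index_def\<close>)
  moreover have "basis_degree p k (t, l - (p ^ k - p ^ (k - t))) = l"
    using lower by (simp add: basis_degree_def)
  ultimately show ?thesis by (rule that)
qed

lemma bij_betw_basis_degree:
  assumes "0 < p"
  shows "bij_betw (basis_degree p k) (basis_index p k s) {..<p ^ k}"
proof (rule bij_betw_imageI)
  show "inj_on (basis_degree p k) (basis_index p k s)"
  proof (rule inj_onI, clarify)
    fix t j t' j'
    assume tj: "(t, j) \<in> basis_index p k s" "(t', j') \<in> basis_index p k s"
      and eq: "basis_degree p k (t, j) = basis_degree p k (t', j')"
    then have "t = t'"
      using basis_degree_less_basis_degree[OF assms] by (metis less_irrefl linorder_neqE_nat)
    then show "t = t' \<and> j = j'"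
      using eq by (simp add: basis_degree_def)
  qed
  show "basis_degree p k ` basis_index p k s = {..<p ^ k}"
  proof (intro equalityI subsetI)
    fix l assume "l \<in> basis_degree p k ` basis_index p k s"
    then show "l \<in> {..<p ^ k}"
      using basis_degree_less_power[OF assms] by auto
  next
    fix l assume "l \<in> {..<p ^ k}"
    then have "l < p ^ k" by simp
    then obtain tj where "tj \<in> basis_index p k s" "basis_degree p k tj = l"
      by (rule basis_degree_surj[OF assms])
    then show "l \<in> basis_degree p k ` basis_index p k s"
      by blast
  qed
qed

lemma algebraic_int_pure_root:
  fixes \<alpha> :: "'a::field_char_0"
  assumes "\<alpha> ^ n = of_int m" "0 < n"
  shows "algebraic_int \<alpha>"
proof (rule algebraic_int_root[of "of_int m" "monom 1 n"])
  show "\<forall>i. coeff (monom 1 n) i \<in> \<int>"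
    by simp
qed (use assms in \<open>simp_all add: poly_monom degree_monom_eq\<close>)

lemma squarefree_not_power:
  fixes m r :: int
  assumes "squarefree m" "\<not> is_unit m" "2 \<le> T"
  shows "m \<noteq> r ^ T"
proof
  assume m: "m = r ^ T"
  then have "r ^ 2 dvd m"
    using assms(3) by (simp add: le_imp_power_dvd)
  then have "is_unit r"
    using assms(1) by (simp add: squarefree_def)
  then show False
    using assms(2) m by (metis is_unit_power_iff)
qed

lemma algebraic_int_h_poly_div:
  fixes m r :: int and \<alpha> :: "'a::field_char_0"
  assumes m: "squarefree m" "\<not> is_unit m" and p: "prime p"
    and \<alpha>: "\<alpha> ^ (p ^ k) = of_int m"
    and r: "[r = m] (mod int p ^ (k + 1))"
    and t: "t \<le> k" "t \<le> multiplicity (int p) (m ^ p - m) - 1"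
  shows "algebraic_int (poly (map_poly of_int (h_poly r p k t)) \<alpha> / of_nat (p ^ t))"
proof -
  define T \<beta> where "T = p ^ t" and "\<beta> = \<alpha> ^ p ^ (k - t)"
  have eq: "poly (map_poly of_int (h_poly r p k t)) \<alpha> / of_nat (p ^ t)
      = (\<Sum>i<T. of_int r ^ (T - Suc i) * \<beta> ^ i) / of_nat T"
    unfolding poly_h_poly[OF t(1)] T_def \<beta>_def ..
  have "algebraic_int ((\<Sum>i<T. of_int r ^ (T - Suc i) * \<beta> ^ i) / of_nat T)"
  proof (cases "t = 0")
    case False
    have \<beta>: "\<beta> ^ T = of_int m"
      using \<alpha> t(1) by (simp add: \<beta>_def T_def flip: power_mult power_add)
    have "p ^ 1 \<le> p ^ t"
      using False prime_gt_0_nat[OF p] by (intro power_increasing) auto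
    then have "2 \<le> T"
      using prime_ge_2_nat[OF p] by (simp add: T_def)
    have "\<beta> \<noteq> of_int r"
    proof
      assume "\<beta> = of_int r"
      then have "m = r ^ T"
        using \<beta> by (metis of_int_eq_iff of_int_power)
      with squarefree_not_power[OF m \<open>2 \<le> T\<close>] show False ..
    qed
    moreover have "int p ^ (t + 1) dvd m - r ^ T"
      using cong_prime_power_residue_power[OF r t]
      by (simp add: T_def cong_iff_dvd_diff dvd_diff_commute)
    then have "int T ^ j dvd int (T choose j) * (m - r ^ T) ^ (j - 1)" if "0 < j" "j \<le> T" for j
      using prime_power_pow_dvd_binomial_mult[OF p that[unfolded T_def]] by (simp add: T_def)
    ultimately show ?thesis
      using \<beta> by (intro algebraic_int_geometric_sum_div)
  qed (simp add: T_def)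
  then show ?thesis
    by (simp only: eq)
qed

lemma basis_elem_algebraic_int:
  fixes m r :: int and \<alpha> :: complex
  assumes m: "squarefree m" "\<not> is_unit m" and p: "prime p"
    and \<alpha>: "\<alpha> ^ (p ^ k) = of_int m"
    and r: "[r = m] (mod int p ^ (k + 1))"
    and t: "t \<le> k" "t \<le> multiplicity (int p) (m ^ p - m) - 1"
  shows "algebraic_int (basis_elem r p k \<alpha> (t, j))"
proof -
  have "basis_elem r p k \<alpha> (t, j)
      = \<alpha> ^ j * (poly (map_poly of_int (h_poly r p k t)) \<alpha> / of_nat (p ^ t))"
    by (simp add: basis_elem_def)
  moreover have "algebraic_int \<alpha>"
    using algebraic_int_pure_root[OF \<alpha>] prime_gt_0_nat[OF p] by simp
  ultimately show ?thesis
    using algebraic_int_h_poly_div[OF assms] by (simp only: algebraic_int_mult algebraic_int_power)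
qed

lemma basis_polys_independent:
  fixes m r :: int and \<alpha> :: "'a::field_char_0" and w :: "nat \<times> nat \<Rightarrow> rat"
  assumes m: "squarefree m" "\<not> is_unit m" and "0 < p" "s \<le> k"
    and \<alpha>: "\<alpha> ^ (p ^ k) = of_int m"
    and zero: "(\<Sum>tj\<in>basis_index p k s.
      of_rat (w tj) * poly (map_poly of_int (basis_poly r p k tj)) \<alpha>) = 0"
    and tj: "tj \<in> basis_index p k s"
  shows "w tj = 0"
proof -
  interpret of_rat_poly: map_poly_comm_ring_hom "of_rat :: rat \<Rightarrow> 'a" ..
  define I where "I = basis_index p k s"
  define P where "P tj = (map_poly of_int (basis_poly r p k tj) :: rat poly)" for tj
  define q where "q = (\<Sum>tj\<in>I. smult (w tj) (P tj))"
  have bij: "bij_betw (basis_degree p k) I {..<p ^ k}"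
    unfolding I_def using \<open>0 < p\<close> by (rule bij_betw_basis_degree)
  then have "finite I"
    by (simp add: bij_betw_finite)
  have P: "degree (P tj) = basis_degree p k tj" "lead_coeff (P tj) = 1" if "tj \<in> I" for tj
  proof -
    have "fst tj \<le> k"
      using that \<open>s \<le> k\<close> by (auto simp: I_def basis_index_def)
    from basis_poly_monic[where r = r and j = "snd tj", OF \<open>0 < p\<close> this]
    show "degree (P tj) = basis_degree p k tj" "lead_coeff (P tj) = 1"
      by (simp_all add: P_def)
  qed
  have "poly (map_poly of_rat q) \<alpha> = 0"
    using zero by (simp add: q_def P_def I_def of_rat_poly.hom_sum poly_sum
        of_rat_hom.map_poly_hom_smult map_poly_map_poly o_def)
  moreover have "degree q < p ^ k"
    unfolding q_def using \<open>finite I\<close> \<open>0 < p\<close> bij P(1)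
    by (intro degree_sum_smult_less) (auto simp: bij_betw_def)
  ultimately have "q = 0"
    using pure_root_degree_le[OF m _ \<alpha>] \<open>0 < p\<close> by (meson leD zero_less_power)
  moreover have "inj_on (\<lambda>tj. degree (P tj)) I"
    using bij P(1) by (simp add: bij_betw_def inj_on_def)
  moreover have "P tj \<noteq> 0" if "tj \<in> I" for tj
    using P(2)[OF that] by auto
  ultimately show "w tj = 0"
    using sum_smult_distinct_degrees_eq_0[OF \<open>finite I\<close>, of P] tj by (simp add: q_def I_def)
qed

lemma basis_elems_independent:
  fixes m r :: int and \<alpha> :: complex and c :: "nat \<times> nat \<Rightarrow> complex"
  assumes m: "squarefree m" "\<not> is_unit m" and "0 < p" "s \<le> k"
    and \<alpha>: "\<alpha> ^ (p ^ k) = of_int m"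
    and rat: "\<forall>tj\<in>basis_index p k s. c tj \<in> \<rat>"
    and zero: "(\<Sum>tj\<in>basis_index p k s. c tj * basis_elem r p k \<alpha> tj) = 0"
    and tj: "tj \<in> basis_index p k s"
  shows "c tj = 0"
proof -
  have "\<forall>tj\<in>basis_index p k s. \<exists>x. c tj = of_rat x"
    using rat by (auto elim!: Rats_cases)
  then obtain d where d: "\<And>tj. tj \<in> basis_index p k s \<Longrightarrow> c tj = of_rat (d tj)"
    by (rule bchoice[elim_format]) blast
  define w where "w tj = d tj / of_nat (p ^ fst tj)" for tj
  have "c tj * basis_elem r p k \<alpha> tj
      = of_rat (w tj) * poly (map_poly of_int (basis_poly r p k tj)) \<alpha>"
    if "tj \<in> basis_index p k s" for tj
    using that by (cases tj) (simp add: w_def d basis_elem_eq_poly of_rat_divide of_rat_power)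
  then have "w tj = 0"
    using basis_polys_independent[OF m \<open>0 < p\<close> \<open>s \<le> k\<close> \<alpha> _ tj] zero by (simp cong: sum.cong)
  then show ?thesis
    using d[OF tj] \<open>0 < p\<close> by (simp add: w_def)
qed

theorem corollary3p2:
  fixes m :: int and p k s :: nat and r :: int and \<alpha> :: complex
  assumes "squarefree m" and "m \<noteq> 1" and "m \<noteq> -1"
    and "prime p" and "k > 0"
    and "\<alpha> ^ (p^k) = of_int m"
    and "r = m mod (int p)^(k+1)"
    and "s = multiplicity (int p) (m^p - m) - 1"
    and "s < k"
  shows "card (basis_index p k s) = p^k
     \<and> (\<forall>tj\<in>basis_index p k s. algebraic_int (basis_elem r p k \<alpha> tj))
     \<and> (\<forall>c :: nat \<times> nat \<Rightarrow> complex.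
          (\<forall>tj\<in>basis_index p k s. c tj \<in> \<rat>) \<and>
          (\<Sum>tj\<in>basis_index p k s. c tj * basis_elem r p k \<alpha> tj) = 0
          \<longrightarrow> (\<forall>tj\<in>basis_index p k s. c tj = 0))"
proof (intro conjI allI impI ballI)
  have m: "\<not> is_unit m" and "0 < p"
    using assms(2,3,4) by (auto simp: prime_gt_0_nat)
  show "card (basis_index p k s) = p ^ k"
    using bij_betw_same_card[OF bij_betw_basis_degree[OF \<open>0 < p\<close>]] by simp
  show "algebraic_int (basis_elem r p k \<alpha> tj)" if "tj \<in> basis_index p k s" for tj
  proof -
    obtain t j where tj: "tj = (t, j)"
      by (cases tj)
    moreover have "t \<le> s"
      using that by (auto simp: tj basis_index_def)
    moreover have "[r = m] (mod int p ^ (k + 1))"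
      using assms(7) by (simp add: cong_def)
    ultimately show ?thesis
      using basis_elem_algebraic_int[OF assms(1) m assms(4,6)] assms(8,9) by simp
  qed
  show "c tj = 0" if "(\<forall>tj\<in>basis_index p k s. c tj \<in> \<rat>) \<and>
      (\<Sum>tj\<in>basis_index p k s. c tj * basis_elem r p k \<alpha> tj) = 0" "tj \<in> basis_index p k s" for c tj
    using that basis_elems_independent[OF assms(1) m \<open>0 < p\<close> less_imp_le[OF assms(9)] assms(6)]
    by blast
qed

end
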